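(* Let $(X,d)$ be a quasi-pseudometric space such that every $\bar d$-bounded sequence in $X$ contains a $d^s$-convergent subsequence, and let $f:X\to\mathbb{R}\cup\{\infty\}$ be a proper, bounded below, $d$-lower semicontinuous function. Then for every $x_0\in X$ and $\lambda>0$ there exists $z\in X$ such that (i) $f(z)+\lambda\, d(z,x_0)\le f(x_0)$; (ii) $f(y)=f(z)$ for all $y\in S_\lambda(z)$; (iii) $f(z)<f(x)+\lambda\, d(x,z)$ for all $x\in X\setminus S_\lambda(z)$; (iv) for every sequence $(x_n)$ in $X$, if $f(x_n)+\lambda\, d(x_n,z)\to f(z)$, then $\lim_{n\to\infty} d(x_n,z)=0$.
   Context: A quasi-pseudometric on $X$ is a map $d:X\times X\to[0,\infty)$ with $d(x,x)=0$ and $d(x,z)\le d(x,y)+d(y,z)$ for all $x,y,z$. The topology $\tau_d$ has neighborhood base at $x$ the balls $\{y: d(x,y)<r\}$, $r>0$; "$d$-lower semicontinuous" means lower semicontinuous for $\tau_d$. Set $\bar d(x,y)=d(y,x)$ and $d^s=\max\{d,\bar d\}$; $x_n\to x$ in $d^s$ iff $d(x,x_n)\to0$ and $d(x_n,x)\to0$. A sequence is $\bar d$-bounded if there are $x\in X$, $r>0$ with $\bar d(x,x_n)\le r$ for all $n$. $f$ is proper if $\operatorname{dom} f=\{x:f(x)<\infty\}\ne\emptyset$. For $\alpha>0$, $S_\alpha(x)=\{y\in X: f(y)+\alpha\, d(y,x)\le f(x)\}$. *)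

theory Defs
  imports "HOL-Analysis.Analysis"
begin

definition quasi_pseudometric :: "('a \<Rightarrow> 'a \<Rightarrow> real) \<Rightarrow> bool" where
  "quasi_pseudometric d \<longleftrightarrow>
     (\<forall>x y. 0 \<le> d x y) \<and> (\<forall>x. d x x = 0) \<and> (\<forall>x y z. d x z \<le> d x y + d y z)"

definition d_open :: "('a \<Rightarrow> 'a \<Rightarrow> real) \<Rightarrow> 'a set \<Rightarrow> bool" where
  "d_open d U \<longleftrightarrow> (\<forall>x\<in>U. \<exists>r>0. {y. d x y < r} \<subseteq> U)"

definition d_lsc :: "('a \<Rightarrow> 'a \<Rightarrow> real) \<Rightarrow> ('a \<Rightarrow> ereal) \<Rightarrow> bool" where
  "d_lsc d f \<longleftrightarrow> (\<forall>x t. t < f x \<longrightarrow> (\<exists>U. d_open d U \<and> x \<in> U \<and> (\<forall>y\<in>U. t < f y)))"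

definition dbar_bounded_seq :: "('a \<Rightarrow> 'a \<Rightarrow> real) \<Rightarrow> (nat \<Rightarrow> 'a) \<Rightarrow> bool" where
  "dbar_bounded_seq d s \<longleftrightarrow> (\<exists>x r. r > 0 \<and> (\<forall>n. d (s n) x \<le> r))"

definition ds_converges :: "('a \<Rightarrow> 'a \<Rightarrow> real) \<Rightarrow> (nat \<Rightarrow> 'a) \<Rightarrow> 'a \<Rightarrow> bool" where
  "ds_converges d s x \<longleftrightarrow> ((\<lambda>n. d x (s n)) \<longlonglongrightarrow> 0) \<and> ((\<lambda>n. d (s n) x) \<longlonglongrightarrow> 0)"

definition S_set :: "('a \<Rightarrow> 'a \<Rightarrow> real) \<Rightarrow> ('a \<Rightarrow> ereal) \<Rightarrow> real \<Rightarrow> 'a \<Rightarrow> 'a set" where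
  "S_set d f \<alpha> x = {y. f y + ereal (\<alpha> * d y x) \<le> f x}"

end

theory Submission
  imports Defs
begin

text \<open>
  An Ekeland-type iteration: starting in a point of finite value, choose \<open>x\<^sub>n\<^sub>+\<^sub>1 \<in> S(x\<^sub>n)\<close>
  with \<open>f(x\<^sub>n\<^sub>+\<^sub>1)\<close> within \<open>1/(n+1)\<close> of \<open>inf f(S(x\<^sub>n))\<close>. The sets \<open>S(x\<^sub>n)\<close> are nested, and
  since \<open>f\<close> is bounded below they are \<open>d\<close>-bar-bounded, so a subsequence \<open>d\<^sup>s\<close>-converges to
  some \<open>z\<close>. Lower semicontinuity makes each \<open>S(x)\<close> closed under such limits, hence \<open>z\<close> lies
  in every \<open>S(x\<^sub>n)\<close>, and near-minimality forces \<open>f\<close> to be constant and \<open>d(\<cdot>, z)\<close> to vanish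
  on \<open>S(z)\<close>. For (iv), the same compactness argument places every \<open>d\<^sup>s\<close>-cluster point of a
  sequence with \<open>f(x\<^sub>n) + \<lambda> d(x\<^sub>n, z) \<rightarrow> f(z)\<close> inside \<open>S(z)\<close>, i.e. at \<open>d\<close>-distance \<open>0\<close> from \<open>z\<close>.
\<close>

lemma quasi_pseudometric_nonneg: "quasi_pseudometric d \<Longrightarrow> 0 \<le> d x y"
  unfolding quasi_pseudometric_def by blast

lemma quasi_pseudometric_triangle: "quasi_pseudometric d \<Longrightarrow> d x z \<le> d x y + d y z"
  unfolding quasi_pseudometric_def by blast

lemma d_open_ball:
  assumes "quasi_pseudometric d"
  shows "d_open d {y. d x y < r}"
  unfolding d_open_def
proof safe
  fix y assume "d x y < r"
  have "{w. d y w < r - d x y} \<subseteq> {w. d x w < r}"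
  proof safe
    fix w assume "d y w < r - d x y"
    then show "d x w < r"
      using quasi_pseudometric_triangle[OF assms, of x w y] by linarith
  qed
  then show "\<exists>\<rho>>0. {w. d y w < \<rho>} \<subseteq> {w. d x w < r}"
    using \<open>d x y < r\<close> by (intro exI[of _ "r - d x y"]) auto
qed

lemma d_lsc_ball:
  assumes "d_lsc d f" and "t < f x"
  obtains r where "r > 0" and "\<And>y. d x y < r \<Longrightarrow> t < f y"
proof -
  obtain U where "d_open d U" "x \<in> U" "\<forall>y\<in>U. t < f y"
    using assms unfolding d_lsc_def by blast
  then show ?thesis
    using that unfolding d_open_def by blast
qed

lemma d_lscI_ball:
  assumes "quasi_pseudometric d"
    and "\<And>x t. t < f x \<Longrightarrow> \<exists>r>0. \<forall>y. d x y < r \<longrightarrow> t < f y"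
  shows "d_lsc d f"
  unfolding d_lsc_def
proof safe
  fix x t assume "t < f x"
  then obtain r where "r > 0" "\<forall>y. d x y < r \<longrightarrow> t < f y"
    using assms(2) by blast
  moreover have "x \<in> {y. d x y < r}"
    using \<open>r > 0\<close> assms(1) by (simp add: quasi_pseudometric_def)
  ultimately show "\<exists>U. d_open d U \<and> x \<in> U \<and> (\<forall>y\<in>U. t < f y)"
    using d_open_ball[OF assms(1)] by blast
qed

lemma d_lsc_plus_dist:
  fixes f :: "'a \<Rightarrow> ereal"
  assumes qpm: "quasi_pseudometric d" and lsc: "d_lsc d f" and lam: "lam > 0"
  shows "d_lsc d (\<lambda>y. f y + ereal (lam * d y p))"
proof (rule d_lscI_ball[OF qpm])
  fix w t assume "t < f w + ereal (lam * d w p)"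
  then obtain r where tr: "t < ereal r" and "ereal r < f w + ereal (lam * d w p)"
    using ereal_dense2 by blast
  then have "ereal (r - lam * d w p) < f w"
    by (cases "f w") auto
  then obtain s where "ereal (r - lam * d w p) < ereal s" and s: "ereal s < f w"
    using ereal_dense2 by blast
  then have rs: "r - lam * d w p < s" by simp
  obtain \<rho> where "\<rho> > 0" and \<rho>: "\<And>y. d w y < \<rho> \<Longrightarrow> ereal s < f y"
    using d_lsc_ball[OF lsc s] by blast
  define \<delta> where "\<delta> = min \<rho> ((s - r + lam * d w p) / lam)"
  have "\<delta> > 0" using \<open>\<rho> > 0\<close> rs lam by (simp add: \<delta>_def)
  moreover have "t < f y + ereal (lam * d y p)" if "d w y < \<delta>" for y
  proof -
    have "lam * d w y < s - r + lam * d w p"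
      using that lam by (simp add: \<delta>_def field_simps)
    moreover have "lam * d w p \<le> lam * d w y + lam * d y p"
      using quasi_pseudometric_triangle[OF qpm, of w p y] lam
      by (simp add: distrib_left[symmetric])
    ultimately have "ereal r < ereal (s + lam * d y p)" by simp
    also have "\<dots> < f y + ereal (lam * d y p)"
      using \<rho>[of y] that by (cases "f y") (auto simp: \<delta>_def)
    finally show ?thesis
      using tr by (rule less_trans[rotated])
  qed
  ultimately show "\<exists>\<delta>>0. \<forall>y. d w y < \<delta> \<longrightarrow> t < f y + ereal (lam * d y p)"
    by blast
qed

lemma d_lsc_le_if_eventually_le:
  fixes g :: "'a \<Rightarrow> ereal"
  assumes lsc: "d_lsc d g" and conv: "(\<lambda>n. d w (t n)) \<longlonglongrightarrow> 0"
    and ev: "eventually (\<lambda>n. g (t n) \<le> K) sequentially"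
  shows "g w \<le> K"
proof (rule ccontr)
  assume "\<not> g w \<le> K"
  then have "K < g w" by simp
  then obtain r where "r > 0" and r: "\<And>y. d w y < r \<Longrightarrow> K < g y"
    using d_lsc_ball[OF lsc] by blast
  have "eventually (\<lambda>n. g (t n) \<le> K \<and> d w (t n) < r) sequentially"
    using ev order_tendstoD(2)[OF conv \<open>r > 0\<close>] by (rule eventually_conj)
  then obtain n where "g (t n) \<le> K" and "d w (t n) < r"
    using eventually_happens'[OF sequentially_bot] by blast
  then show False using r[of "t n"] by simp
qed

lemma d_lsc_le_lim:
  fixes g :: "'a \<Rightarrow> ereal"
  assumes lsc: "d_lsc d g" and conv: "(\<lambda>n. d w (t n)) \<longlonglongrightarrow> 0"
    and lim: "(\<lambda>n. g (t n)) \<longlonglongrightarrow> L"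
  shows "g w \<le> L"
proof (rule dense_ge)
  fix K assume "L < K"
  have "eventually (\<lambda>n. g (t n) \<le> K) sequentially"
    by (rule eventually_mono[OF order_tendstoD(2)[OF lim \<open>L < K\<close>]]) simp
  then show "g w \<le> K"
    using d_lsc_le_if_eventually_le[OF lsc conv] by blast
qed

lemma dbar_bounded_seqI:
  fixes f :: "'a \<Rightarrow> ereal"
  assumes c: "\<forall>x. ereal c \<le> f x" and lam: "lam > 0"
    and le: "\<And>n. f (s n) + ereal (lam * d (s n) p) \<le> ereal K"
  shows "dbar_bounded_seq d s"
  unfolding dbar_bounded_seq_def
proof (intro exI conjI allI)
  fix n
  have "ereal (c + lam * d (s n) p) = ereal c + ereal (lam * d (s n) p)"
    by simp
  also have "\<dots> \<le> f (s n) + ereal (lam * d (s n) p)"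
    using c by (intro add_right_mono) simp
  also have "\<dots> \<le> ereal K"
    by (rule le)
  finally have "ereal (c + lam * d (s n) p) \<le> ereal K" .
  then have "d (s n) p \<le> (K - c) / lam"
    using lam by (simp add: field_simps)
  then show "d (s n) p \<le> max 1 ((K - c) / lam)" by simp
qed simp

lemma S_set_refl: "quasi_pseudometric d \<Longrightarrow> x \<in> S_set d f lam x"
  unfolding quasi_pseudometric_def S_set_def by simp

lemma S_set_trans:
  fixes f :: "'a \<Rightarrow> ereal"
  assumes qpm: "quasi_pseudometric d" and lam: "lam > 0"
    and y: "y \<in> S_set d f lam x" and w: "w \<in> S_set d f lam y"
  shows "w \<in> S_set d f lam x"
proof -
  have "lam * d w x \<le> lam * d w y + lam * d y x"
    using quasi_pseudometric_triangle[OF qpm, of w x y] lam by (simp add: distrib_left[symmetric])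
  then have "ereal (lam * d w x) \<le> ereal (lam * d w y) + ereal (lam * d y x)"
    by simp
  then have "f w + ereal (lam * d w x) \<le> f w + (ereal (lam * d w y) + ereal (lam * d y x))"
    by (rule add_left_mono)
  also have "\<dots> = (f w + ereal (lam * d w y)) + ereal (lam * d y x)"
    by (simp add: add.assoc)
  also have "\<dots> \<le> f y + ereal (lam * d y x)"
    using w unfolding S_set_def by (auto intro: add_right_mono)
  also have "\<dots> \<le> f x"
    using y unfolding S_set_def by auto
  finally show ?thesis unfolding S_set_def by simp
qed

lemma S_set_le:
  fixes f :: "'a \<Rightarrow> ereal"
  assumes qpm: "quasi_pseudometric d" and lam: "lam > 0" and y: "y \<in> S_set d f lam x"
  shows "f y \<le> f x"
proof -
  have "f y \<le> f y + ereal (lam * d y x)"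
    using quasi_pseudometric_nonneg[OF qpm] lam by (simp add: add_increasing2)
  also have "\<dots> \<le> f x" using y unfolding S_set_def by simp
  finally show ?thesis .
qed

lemma S_set_near_inf:
  fixes f :: "'a \<Rightarrow> ereal"
  assumes qpm: "quasi_pseudometric d" and c: "\<forall>x. ereal c \<le> f x"
    and fx: "f x < \<infinity>" and e: "e > 0"
  obtains y where "y \<in> S_set d f lam x" "\<And>w. w \<in> S_set d f lam x \<Longrightarrow> f y \<le> f w + ereal e"
proof -
  define I where "I = (INF w\<in>S_set d f lam x. f w)"
  have "I \<le> f x" unfolding I_def by (rule INF_lower[OF S_set_refl[OF qpm]])
  moreover have "ereal c \<le> I" unfolding I_def using c by (simp add: INF_greatest)
  ultimately have "I < I + ereal e" using fx e by (cases I) auto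
  then obtain y where y: "y \<in> S_set d f lam x" "f y < I + ereal e"
    unfolding I_def by (metis INF_less_iff)
  moreover have "f y \<le> f w + ereal e" if "w \<in> S_set d f lam x" for w
  proof -
    have "I \<le> f w" unfolding I_def using that by (rule INF_lower)
    then show ?thesis using y(2) by (meson add_right_mono less_imp_le order_trans)
  qed
  ultimately show ?thesis using that by blast
qed

lemma S_set_closed_under_limits:
  fixes f :: "'a \<Rightarrow> ereal"
  assumes qpm: "quasi_pseudometric d" and lsc: "d_lsc d f" and lam: "lam > 0"
    and conv: "(\<lambda>n. d z (t n)) \<longlonglongrightarrow> 0"
    and ev: "eventually (\<lambda>n. t n \<in> S_set d f lam x) sequentially"
  shows "z \<in> S_set d f lam x"
  using d_lsc_le_if_eventually_le[OF d_lsc_plus_dist[OF qpm lsc lam] conv] ev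
  unfolding S_set_def by simp

lemma S_set_contains_limit:
  fixes f :: "'a \<Rightarrow> ereal"
  assumes qpm: "quasi_pseudometric d" and lsc: "d_lsc d f" and lam: "lam > 0"
    and conv: "(\<lambda>n. d w (t n)) \<longlonglongrightarrow> 0"
    and lim: "(\<lambda>n. f (t n) + ereal (lam * d (t n) z)) \<longlonglongrightarrow> f z"
  shows "w \<in> S_set d f lam z"
  using d_lsc_le_lim[OF d_lsc_plus_dist[OF qpm lsc lam] conv lim] unfolding S_set_def by simp

lemma S_set_minimizing_chain:
  fixes f :: "'a \<Rightarrow> ereal"
  assumes qpm: "quasi_pseudometric d" and c: "\<forall>x. ereal c \<le> f x"
    and lam: "lam > 0" and fx: "f x < \<infinity>"
  obtains xs where "\<And>n. xs n \<in> S_set d f lam x" and "\<And>n. xs (Suc n) \<in> S_set d f lam (xs n)"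
    and "\<And>n w. w \<in> S_set d f lam (xs n) \<Longrightarrow>
           f (xs (Suc n)) \<le> f w + ereal (inverse (real (Suc n)))"
proof -
  let ?S = "S_set d f lam"
  have "\<exists>xs. \<forall>n. xs n \<in> ?S x \<and> xs (Suc n) \<in> ?S (xs n) \<and>
          (\<forall>w\<in>?S (xs n). f (xs (Suc n)) \<le> f w + ereal (inverse (real (Suc n))))"
  proof (rule dependent_nat_choice)
    show "\<exists>y. y \<in> ?S x" using S_set_refl[OF qpm] by blast
  next
    fix y n assume y: "y \<in> ?S x"
    then have "f y < \<infinity>" using S_set_le[OF qpm lam] fx by (meson le_less_trans)
    moreover have "inverse (real (Suc n)) > 0" by simp
    ultimately obtain y' where "y' \<in> ?S y"
      and "\<And>w. w \<in> ?S y \<Longrightarrow> f y' \<le> f w + ereal (inverse (real (Suc n)))"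
      using S_set_near_inf[OF qpm c] by blast
    then show "\<exists>y'. (y' \<in> ?S x) \<and> y' \<in> ?S y \<and>
                 (\<forall>w\<in>?S y. f y' \<le> f w + ereal (inverse (real (Suc n))))"
      using S_set_trans[OF qpm lam y] by blast
  qed
  then show ?thesis using that by blast
qed

lemma S_set_eq_if_le:
  fixes f :: "'a \<Rightarrow> ereal"
  assumes qpm: "quasi_pseudometric d" and lam: "lam > 0"
    and y: "y \<in> S_set d f lam z" and le: "f z \<le> f y" and fin: "\<bar>f z\<bar> \<noteq> \<infinity>"
  shows "f y = f z \<and> d y z = 0"
proof -
  obtain Z where Z: "f z = ereal Z" using fin by (cases "f z") auto
  moreover have "f y + ereal (lam * d y z) \<le> f z" using y unfolding S_set_def by simp
  ultimately obtain Y where Y: "f y = ereal Y" and "Y + lam * d y z \<le> Z"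
    using le by (cases "f y") auto
  moreover have "Z \<le> Y" using le Y Z by simp
  ultimately have "lam * d y z \<le> 0" by linarith
  then have "d y z = 0"
    using lam quasi_pseudometric_nonneg[OF qpm, of y z] by (simp add: mult_le_0_iff)
  then show ?thesis using Y Z \<open>Y + lam * d y z \<le> Z\<close> \<open>Z \<le> Y\<close> by simp
qed

lemma stationary_point_in_S_set:
  fixes f :: "'a \<Rightarrow> ereal"
  assumes qpm: "quasi_pseudometric d"
    and seqcomp: "\<And>s. dbar_bounded_seq d s \<Longrightarrow> \<exists>\<phi> x. strict_mono \<phi> \<and> ds_converges d (s \<circ> \<phi>) x"
    and c: "\<forall>x. ereal c \<le> f x" and lsc: "d_lsc d f" and lam: "lam > 0" and fx: "f x < \<infinity>"
  obtains z where "z \<in> S_set d f lam x"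
    and "\<And>y. y \<in> S_set d f lam z \<Longrightarrow> f y = f z \<and> d y z = 0"
proof -
  let ?S = "S_set d f lam"
  obtain xs where xs: "\<And>n. xs n \<in> ?S x" and xs_step: "\<And>n. xs (Suc n) \<in> ?S (xs n)"
    and near: "\<And>n w. w \<in> ?S (xs n) \<Longrightarrow> f (xs (Suc n)) \<le> f w + ereal (inverse (real (Suc n)))"
    using S_set_minimizing_chain[OF qpm c lam fx] by blast
  have chain: "xs n \<in> ?S (xs m)" if "m \<le> n" for m n
    using that
  proof (induction n rule: dec_induct)
    case base then show ?case by (rule S_set_refl[OF qpm])
  next
    case (step n) then show ?case using S_set_trans[OF qpm lam _ xs_step] by blast
  qed
  obtain F where F: "f x = ereal F" using fx c[rule_format, of x] by (cases "f x") auto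
  have "f (xs n) + ereal (lam * d (xs n) x) \<le> ereal F" for n
    using xs[of n] unfolding S_set_def F by simp
  then have "dbar_bounded_seq d xs"
    using c lam by (intro dbar_bounded_seqI)
  then obtain \<phi> z where "strict_mono \<phi>" and "ds_converges d (xs \<circ> \<phi>) z"
    using seqcomp by blast
  then have conv: "(\<lambda>n. d z (xs (\<phi> n))) \<longlonglongrightarrow> 0"
    unfolding ds_converges_def by (simp add: comp_def)
  have z: "z \<in> ?S (xs m)" for m
  proof (rule S_set_closed_under_limits[OF qpm lsc lam conv])
    show "eventually (\<lambda>n. xs (\<phi> n) \<in> ?S (xs m)) sequentially"
      using eventually_ge_at_top[of m]
    proof eventually_elim
      case (elim n)
      then have "m \<le> \<phi> n" using seq_suble[OF \<open>strict_mono \<phi>\<close>, of n] by linarith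
      then show ?case by (rule chain)
    qed
  qed
  have "f y = f z \<and> d y z = 0" if y: "y \<in> ?S z" for y
  proof (rule S_set_eq_if_le[OF qpm lam y])
    have approx: "f z \<le> f y + ereal (inverse (real (Suc n)))" for n
      using S_set_le[OF qpm lam z[of "Suc n"]] near[OF S_set_trans[OF qpm lam z y]] by (rule order_trans)
    show "f z \<le> f y"
    proof (rule ereal_le_epsilon2)
      fix e :: real assume "0 < e"
      then obtain n where "inverse (real (Suc n)) < e" using reals_Archimedean by blast
      then have "f y + ereal (inverse (real (Suc n))) \<le> f y + ereal e"
        by (intro add_left_mono) simp
      with approx show "f z \<le> f y + ereal e" by (rule order_trans)
    qed
    have "f z \<le> f x" using S_set_le[OF qpm lam S_set_trans[OF qpm lam xs z]] .
    then show "\<bar>f z\<bar> \<noteq> \<infinity>" using fx c[rule_format, of z] by auto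
  qed
  then show ?thesis using that S_set_trans[OF qpm lam xs z] by blast
qed

lemma frequently_sequentially_subseq:
  assumes "frequently P sequentially"
  shows "\<exists>\<psi> :: nat \<Rightarrow> nat. strict_mono \<psi> \<and> (\<forall>n. P (\<psi> n))"
proof -
  have "infinite {n. P n}"
    unfolding infinite_nat_iff_unbounded_le using assms by (simp add: frequently_sequentially)
  from infinite_enumerate[OF this] show ?thesis by simp
qed

lemma dist_tendsto_zero_at_stationary_point:
  fixes f :: "'a \<Rightarrow> ereal"
  assumes qpm: "quasi_pseudometric d"
    and seqcomp: "\<And>s. dbar_bounded_seq d s \<Longrightarrow> \<exists>\<phi> x. strict_mono \<phi> \<and> ds_converges d (s \<circ> \<phi>) x"
    and c: "\<forall>x. ereal c \<le> f x" and lsc: "d_lsc d f" and lam: "lam > 0"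
    and fz: "f z = ereal Z" and stationary: "\<And>y. y \<in> S_set d f lam z \<Longrightarrow> d y z = 0"
    and lim: "(\<lambda>n. f (w n) + ereal (lam * d (w n) z)) \<longlonglongrightarrow> f z"
  shows "(\<lambda>n. d (w n) z) \<longlonglongrightarrow> 0"
proof (rule order_tendstoI)
  fix l :: real assume "l < 0"
  then show "eventually (\<lambda>n. l < d (w n) z) sequentially"
    by (intro always_eventually allI order_less_le_trans[OF _ quasi_pseudometric_nonneg[OF qpm]])
next
  let ?g = "\<lambda>y. f y + ereal (lam * d y z)"
  fix r :: real assume "0 < r"
  show "eventually (\<lambda>n. d (w n) z < r) sequentially"
  proof (rule ccontr)
    assume "\<not> eventually (\<lambda>n. d (w n) z < r) sequentially"
    then have "frequently (\<lambda>n. r \<le> d (w n) z) sequentially"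
      by (simp add: not_eventually not_less)
    moreover have "eventually (\<lambda>n. ?g (w n) < ereal (Z + 1)) sequentially"
      using order_tendstoD(2)[OF lim] fz by simp
    ultimately have "frequently (\<lambda>n. ?g (w n) < ereal (Z + 1) \<and> r \<le> d (w n) z) sequentially"
      by (rule frequently_eventually_conj)
    then obtain \<psi> :: "nat \<Rightarrow> nat" where "strict_mono \<psi>"
      and below_far: "\<forall>n. ?g (w (\<psi> n)) < ereal (Z + 1) \<and> r \<le> d (w (\<psi> n)) z"
      using frequently_sequentially_subseq by blast
    have "dbar_bounded_seq d (w \<circ> \<psi>)"
      using c lam by (rule dbar_bounded_seqI[where p = z and K = "Z + 1"])
        (use below_far in \<open>simp add: less_imp_le\<close>)
    then obtain \<phi> w' where "strict_mono \<phi>" and "ds_converges d (w \<circ> \<psi> \<circ> \<phi>) w'"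
      using seqcomp by blast
    then have to_w': "(\<lambda>n. d w' (w (\<psi> (\<phi> n)))) \<longlonglongrightarrow> 0"
      and from_w': "(\<lambda>n. d (w (\<psi> (\<phi> n))) w') \<longlonglongrightarrow> 0"
      unfolding ds_converges_def by (simp_all add: comp_def)
    have "(\<lambda>n. ?g (w (\<psi> (\<phi> n)))) \<longlonglongrightarrow> f z"
      using LIMSEQ_subseq_LIMSEQ[OF lim strict_mono_o[OF \<open>strict_mono \<psi>\<close> \<open>strict_mono \<phi>\<close>]]
      by (simp add: comp_def)
    then have "d w' z = 0"
      by (intro stationary S_set_contains_limit[OF qpm lsc lam to_w'])
    then have dz: "d y z \<le> d y w'" for y
      using quasi_pseudometric_triangle[OF qpm, of y z w'] by simp
    have "eventually (\<lambda>n. d (w (\<psi> (\<phi> n))) z < r) sequentially"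
      using order_tendstoD(2)[OF from_w' \<open>0 < r\<close>]
      by (rule eventually_mono) (rule order_le_less_trans[OF dz])
    then obtain n where "d (w (\<psi> (\<phi> n))) z < r"
      using eventually_happens'[OF sequentially_bot] by blast
    moreover have "r \<le> d (w (\<psi> (\<phi> n))) z" using below_far by blast
    ultimately show False by simp
  qed
qed

theorem mainTheorem3:
  fixes d :: "'a \<Rightarrow> 'a \<Rightarrow> real" and f :: "'a \<Rightarrow> ereal"
    and x0 :: 'a and lam :: real
  assumes qpm: "quasi_pseudometric d"
    and seqcomp: "\<And>s. dbar_bounded_seq d s \<Longrightarrow>
                     \<exists>\<phi> x. strict_mono \<phi> \<and> ds_converges d (s \<circ> \<phi>) x"
    and no_minf: "\<And>x. f x \<noteq> -\<infinity>"
    and proper: "\<exists>x. f x < \<infinity>"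
    and bdd_below: "\<exists>c::real. \<forall>x. ereal c \<le> f x"
    and lsc: "d_lsc d f"
    and lam: "lam > 0"
  shows "\<exists>z. f z + ereal (lam * d z x0) \<le> f x0
           \<and> (\<forall>y\<in>S_set d f lam z. f y = f z)
           \<and> (\<forall>x. x \<notin> S_set d f lam z \<longrightarrow> f z < f x + ereal (lam * d x z))
           \<and> (\<forall>xs::nat \<Rightarrow> 'a. ((\<lambda>n. f (xs n) + ereal (lam * d (xs n) z)) \<longlonglongrightarrow> f z)
                  \<longrightarrow> ((\<lambda>n. d (xs n) z) \<longlonglongrightarrow> 0))"
proof -
  obtain c where c: "\<forall>x. ereal c \<le> f x" using bdd_below by blast
  \<comment> \<open>If \<open>f x\<^sub>0 = \<infinity>\<close>, (i) is trivial and we may start from any point of finite value.\<close>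
  obtain x1 where x1: "f x1 < \<infinity>" and x1_x0: "f x0 < \<infinity> \<Longrightarrow> x1 = x0"
  proof (cases "f x0 < \<infinity>")
    case True
    then show ?thesis using that by blast
  next
    case False
    then show ?thesis using proper that by blast
  qed
  obtain z where z: "z \<in> S_set d f lam x1"
    and stationary: "\<And>y. y \<in> S_set d f lam z \<Longrightarrow> f y = f z \<and> d y z = 0"
    using stationary_point_in_S_set[OF qpm seqcomp c lsc lam x1] by blast
  obtain Z where Z: "f z = ereal Z"
    using S_set_le[OF qpm lam z] x1 c[rule_format, of z] by (cases "f z") auto
  show ?thesis
  proof (intro exI[of _ z] conjI allI impI ballI)
    show "f z + ereal (lam * d z x0) \<le> f x0"
      using z x1_x0 unfolding S_set_def by (cases "f x0 < \<infinity>") auto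
    show "f y = f z" if "y \<in> S_set d f lam z" for y
      using stationary[OF that] by simp
    show "f z < f x + ereal (lam * d x z)" if "x \<notin> S_set d f lam z" for x
      using that unfolding S_set_def by simp
    show "(\<lambda>n. d (xs n) z) \<longlonglongrightarrow> 0"
      if "(\<lambda>n. f (xs n) + ereal (lam * d (xs n) z)) \<longlonglongrightarrow> f z" for xs :: "nat \<Rightarrow> 'a"
    proof (rule dist_tendsto_zero_at_stationary_point[OF qpm seqcomp c lsc lam Z _ that])
      fix y assume "y \<in> S_set d f lam z"
      from stationary[OF this] show "d y z = 0" by blast
    qed
  qed
qed

end
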